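(* The relations $\le_1$, $\le_2$ and $\le_3$ are partial orders on $\mathbf K_{\rm fnq}$.
   Context: $\mathbf K_{\rm fnq}$ is the class of structures $M$ in the vocabulary consisting of unary predicates $P,Q$, a ternary relation $E$, and $n$-ary relations $Q_{n,k}$ ($n,k\ge1$), such that: (a) $P^M,Q^M$ partition the universe of $M$ and $P^M\neq\emptyset$; (b) $E^M\subseteq P^M\times P^M\times Q^M$, and we write $aE^M_cb$ for $(a,b,c)\in E^M$; (c) for $c\in Q^M$, $E^M_c$ is an equivalence relation on $P^M$ and $\sup\{|a/E^M_c|:a\in P^M\}$ is finite; (d) $Q^M_{n,k}\subseteq (Q^M)^n$; (e) for $\bar c=\langle c_\ell:\ell<n\rangle\in{}^n(Q^M)$, $E^M_{\bar c}$ denotes the equivalence relation on $P^M$ generated by $\bigcup_\ell E^M_{c_\ell}$; (f) ${}^n(Q^M)=\bigcup_{k\ge1}Q^M_{n,k}$; (g) if $\bar c\in Q^M_{n,k}$ then $|a/E^M_{\bar c}|\le k$ for every $a\in P^M$. For $M,N\in\mathbf K_{\rm fnq}$: $M\le_1N$ iff $M$ is a substructure of $N$. $M\le_3N$ iff $M\subseteq N$ and for every countable $A\subseteq N$ with $A\cap Q^N$ finite there is a one-to-one homomorphism (e.g. an embedding) from $N{\restriction}A$ into $M$ which is the identity on $A\cap M$. $M\le_2N$ is defined like $\le_3$ but only for finite $A\subseteq N$. *)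

theory Defs
  imports Main "HOL-Library.Countable_Set"
begin

text \<open>Structures in the vocabulary {P, Q, E, Q_{n,k} (n,k >= 1)}.
  Tuples of length n are represented as lists of length n.
  Ternary E is a set of triples (a,b,c), meaning a E_c b.\<close>

record 'a fnq_str =
  univ :: "'a set"
  PP   :: "'a set"
  QQ   :: "'a set"
  EE   :: "('a \<times> 'a \<times> 'a) set"
  QR   :: "nat \<Rightarrow> nat \<Rightarrow> 'a list set"

definition Erel :: "'a fnq_str \<Rightarrow> 'a \<Rightarrow> 'a rel" where
  "Erel M c = {(a, b). (a, b, c) \<in> EE M}"

definition Egen :: "'a fnq_str \<Rightarrow> 'a list \<Rightarrow> 'a rel" where
  "Egen M cs = (let U = (\<Union>c\<in>set cs. Erel M c) in (Id_on (PP M) \<union> U \<union> U\<inverse>)\<^sup>+)"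

definition K_fnq :: "'a fnq_str \<Rightarrow> bool" where
  "K_fnq M \<longleftrightarrow>
     \<comment> \<open>(a) P, Q partition the universe, P nonempty\<close>
     PP M \<union> QQ M = univ M \<and> PP M \<inter> QQ M = {} \<and> PP M \<noteq> {} \<and>
     \<comment> \<open>(b)\<close>
     EE M \<subseteq> PP M \<times> PP M \<times> QQ M \<and>
     \<comment> \<open>(c)\<close>
     (\<forall>c\<in>QQ M. equiv (PP M) (Erel M c) \<and>
        (\<exists>m::nat. \<forall>a\<in>PP M. finite (Erel M c `` {a}) \<and> card (Erel M c `` {a}) \<le> m)) \<and>
     \<comment> \<open>(d) Q_{n,k} is an n-ary relation on Q, only for n,k >= 1\<close>
     (\<forall>n k. QR M n k \<subseteq> {cs. length cs = n \<and> set cs \<subseteq> QQ M}) \<and>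
     (\<forall>n k. (n = 0 \<or> k = 0) \<longrightarrow> QR M n k = {}) \<and>
     \<comment> \<open>(f)\<close>
     (\<forall>n\<ge>1. \<forall>cs. length cs = n \<and> set cs \<subseteq> QQ M \<longrightarrow> (\<exists>k\<ge>1. cs \<in> QR M n k)) \<and>
     \<comment> \<open>(g)\<close>
     (\<forall>n k cs. cs \<in> QR M n k \<longrightarrow>
        (\<forall>a\<in>PP M. finite (Egen M cs `` {a}) \<and> card (Egen M cs `` {a}) \<le> k))"

definition substr :: "'a fnq_str \<Rightarrow> 'a fnq_str \<Rightarrow> bool" where
  "substr M N \<longleftrightarrow> univ M \<subseteq> univ N \<and>
     PP M = PP N \<inter> univ M \<and> QQ M = QQ N \<inter> univ M \<and>
     EE M = EE N \<inter> (univ M \<times> univ M \<times> univ M) \<and>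
     (\<forall>n k. QR M n k = {cs \<in> QR N n k. set cs \<subseteq> univ M})"

definition inj_hom_on :: "('a \<Rightarrow> 'a) \<Rightarrow> 'a fnq_str \<Rightarrow> 'a set \<Rightarrow> 'a fnq_str \<Rightarrow> bool" where
  "inj_hom_on h N A M \<longleftrightarrow> inj_on h A \<and> h ` A \<subseteq> univ M \<and>
     (\<forall>x\<in>A. x \<in> PP N \<longrightarrow> h x \<in> PP M) \<and>
     (\<forall>x\<in>A. x \<in> QQ N \<longrightarrow> h x \<in> QQ M) \<and>
     (\<forall>a\<in>A. \<forall>b\<in>A. \<forall>c\<in>A. (a, b, c) \<in> EE N \<longrightarrow> (h a, h b, h c) \<in> EE M) \<and>
     (\<forall>n k cs. cs \<in> QR N n k \<and> set cs \<subseteq> A \<longrightarrow> map h cs \<in> QR M n k)"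

definition le1 :: "'a fnq_str \<Rightarrow> 'a fnq_str \<Rightarrow> bool" where
  "le1 M N \<longleftrightarrow> substr M N"

definition le2 :: "'a fnq_str \<Rightarrow> 'a fnq_str \<Rightarrow> bool" where
  "le2 M N \<longleftrightarrow> substr M N \<and>
     (\<forall>A. A \<subseteq> univ N \<and> finite A \<longrightarrow>
        (\<exists>h. inj_hom_on h N A M \<and> (\<forall>x\<in>A \<inter> univ M. h x = x)))"

definition le3 :: "'a fnq_str \<Rightarrow> 'a fnq_str \<Rightarrow> bool" where
  "le3 M N \<longleftrightarrow> substr M N \<and>
     (\<forall>A. A \<subseteq> univ N \<and> countable A \<and> finite (A \<inter> QQ N) \<longrightarrow>
        (\<exists>h. inj_hom_on h N A M \<and> (\<forall>x\<in>A \<inter> univ M. h x = x)))"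

definition rel_on_K :: "('a fnq_str \<Rightarrow> 'a fnq_str \<Rightarrow> bool) \<Rightarrow> 'a fnq_str rel" where
  "rel_on_K R = {(M, N). K_fnq M \<and> K_fnq N \<and> R M N}"

end

theory Submission
  imports Defs
begin

text \<open>Each of the three relations implies that M is a substructure of N, and substructure
  is antisymmetric, so only reflexivity and transitivity need work. For \<open>\<le>\<^sub>2\<close> and \<open>\<le>\<^sub>3\<close>
  transitivity composes the two partial embeddings: first map A into N, then map its image
  into M. This needs the image to be again an admissible set; for \<open>\<le>\<^sub>3\<close> this holds because
  a homomorphism between structures of \<open>K\<^sub>f\<^sub>n\<^sub>q\<close> maps no element of P into Q, so the
  Q-part of the image is the image of the Q-part.\<close>

lemma K_fnq_univ: "K_fnq M \<Longrightarrow> PP M \<union> QQ M = univ M"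
  and K_fnq_disjoint: "K_fnq M \<Longrightarrow> PP M \<inter> QQ M = {}"
  and K_fnq_EE: "K_fnq M \<Longrightarrow> EE M \<subseteq> PP M \<times> PP M \<times> QQ M"
  and K_fnq_QR: "K_fnq M \<Longrightarrow> QR M n k \<subseteq> {cs. length cs = n \<and> set cs \<subseteq> QQ M}"
  unfolding K_fnq_def by (elim conjE; blast)+

lemma substr_refl: "K_fnq M \<Longrightarrow> substr M M"
  unfolding substr_def using K_fnq_univ K_fnq_EE K_fnq_QR by fast

lemma substr_trans: "substr M N \<Longrightarrow> substr N L \<Longrightarrow> substr M L"
  unfolding substr_def by auto

lemma substr_antisym:
  assumes "substr M N" "substr N M"
  shows "M = N"
proof -
  have "univ M = univ N" "PP M = PP N" "QQ M = QQ N" "EE M = EE N"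
    using assms unfolding substr_def by blast+
  moreover have "QR M = QR N"
    using assms unfolding substr_def by (intro ext) blast
  ultimately show ?thesis by simp
qed

lemma partial_order_on_rel_on_K:
  assumes refl: "\<And>M. K_fnq M \<Longrightarrow> R M M"
    and trans: "\<And>M N L. K_fnq M \<Longrightarrow> K_fnq N \<Longrightarrow> K_fnq L \<Longrightarrow> R M N \<Longrightarrow> R N L \<Longrightarrow> R M L"
    and substr: "\<And>M N. R M N \<Longrightarrow> substr M N"
  shows "partial_order_on {M. K_fnq M} (rel_on_K R)"
  unfolding partial_order_on_def preorder_on_def
proof (intro conjI)
  show "rel_on_K R \<subseteq> {M. K_fnq M} \<times> {M. K_fnq M}"
    unfolding rel_on_K_def by blast
  show "refl_on {M. K_fnq M} (rel_on_K R)"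
    by (rule refl_onI) (simp add: rel_on_K_def refl)
  show "trans (rel_on_K R)"
    by (rule transI) (simp add: rel_on_K_def, metis trans)
  show "antisym (rel_on_K R)"
    by (rule antisymI) (simp add: rel_on_K_def, metis substr substr_antisym)
qed

lemma inj_hom_on_id: "A \<subseteq> univ M \<Longrightarrow> inj_hom_on id M A M"
  unfolding inj_hom_on_def by auto

lemma inj_hom_on_comp:
  assumes "inj_hom_on h L A N" "inj_hom_on g N (h ` A) M"
  shows "inj_hom_on (g \<circ> h) L A M"
proof -
  have "map (g \<circ> h) cs \<in> QR M n k" if "cs \<in> QR L n k" "set cs \<subseteq> A" for n k cs
  proof -
    have "map h cs \<in> QR N n k" "set (map h cs) \<subseteq> h ` A"
      using assms(1) that unfolding inj_hom_on_def by auto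
    then have "map g (map h cs) \<in> QR M n k"
      using assms(2) unfolding inj_hom_on_def by blast
    then show ?thesis by simp
  qed
  moreover have "inj_on (g \<circ> h) A"
    using assms unfolding inj_hom_on_def by (auto intro: comp_inj_on)
  ultimately show ?thesis
    using assms unfolding inj_hom_on_def by (simp add: image_subset_iff)
qed

lemma inj_hom_on_comp_fixing:
  assumes h: "inj_hom_on h L A N" "\<forall>x\<in>A \<inter> univ N. h x = x"
    and g: "inj_hom_on g N (h ` A) M" "\<forall>x\<in>h ` A \<inter> univ M. g x = x"
    and "univ M \<subseteq> univ N"
  shows "inj_hom_on (g \<circ> h) L A M \<and> (\<forall>x\<in>A \<inter> univ M. (g \<circ> h) x = x)"
proof
  show "inj_hom_on (g \<circ> h) L A M"
    using inj_hom_on_comp h g by blast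
  show "\<forall>x\<in>A \<inter> univ M. (g \<circ> h) x = x"
  proof
    fix x assume x: "x \<in> A \<inter> univ M"
    then have "h x = x" using h(2) assms(5) by blast
    with x g(2) show "(g \<circ> h) x = x" by force
  qed
qed

lemma inj_hom_on_QQ_image:
  assumes "K_fnq L" "K_fnq N" "inj_hom_on h L A N" "A \<subseteq> univ L"
  shows "h ` A \<inter> QQ N \<subseteq> h ` (A \<inter> QQ L)"
proof -
  have "h x \<notin> QQ N" if "x \<in> A" "x \<notin> QQ L" for x
  proof -
    have "x \<in> PP L" using that assms(4) K_fnq_univ[OF assms(1)] by blast
    then have "h x \<in> PP N" using that assms(3) unfolding inj_hom_on_def by blast
    then show ?thesis using K_fnq_disjoint[OF assms(2)] by blast
  qed
  then show ?thesis by blast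
qed

lemma le2_substr: "le2 M N \<Longrightarrow> substr M N"
  and le3_substr: "le3 M N \<Longrightarrow> substr M N"
  unfolding le2_def le3_def by blast+

lemma le2_refl: "K_fnq M \<Longrightarrow> le2 M M"
  and le3_refl: "K_fnq M \<Longrightarrow> le3 M M"
  unfolding le2_def le3_def using substr_refl inj_hom_on_id by (metis id_apply)+

lemma le2_embeds:
  "le2 M N \<Longrightarrow> A \<subseteq> univ N \<Longrightarrow> finite A \<Longrightarrow>
    \<exists>h. inj_hom_on h N A M \<and> (\<forall>x\<in>A \<inter> univ M. h x = x)"
  unfolding le2_def by (elim conjE allE impE) simp_all

lemma le3_embeds:
  "le3 M N \<Longrightarrow> A \<subseteq> univ N \<Longrightarrow> countable A \<Longrightarrow> finite (A \<inter> QQ N) \<Longrightarrow>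
    \<exists>h. inj_hom_on h N A M \<and> (\<forall>x\<in>A \<inter> univ M. h x = x)"
  unfolding le3_def by (elim conjE allE impE) simp_all

lemma le2_trans:
  assumes MN: "le2 M N" and NL: "le2 N L"
  shows "le2 M L"
  unfolding le2_def
proof (intro conjI allI impI)
  show "substr M L"
    using MN NL le2_substr substr_trans by blast
  fix A assume A: "A \<subseteq> univ L \<and> finite A"
  then obtain h where h: "inj_hom_on h L A N" "\<forall>x\<in>A \<inter> univ N. h x = x"
    using le2_embeds[OF NL] by blast
  have "h ` A \<subseteq> univ N" "finite (h ` A)"
    using h(1) A unfolding inj_hom_on_def by simp_all
  then obtain g where g: "inj_hom_on g N (h ` A) M" "\<forall>x\<in>h ` A \<inter> univ M. g x = x"
    using le2_embeds[OF MN] by blast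
  have "univ M \<subseteq> univ N"
    using le2_substr[OF MN] unfolding substr_def by blast
  then show "\<exists>f. inj_hom_on f L A M \<and> (\<forall>x\<in>A \<inter> univ M. f x = x)"
    using inj_hom_on_comp_fixing[OF h g] by blast
qed

lemma le3_trans:
  assumes "K_fnq N" "K_fnq L" and MN: "le3 M N" and NL: "le3 N L"
  shows "le3 M L"
  unfolding le3_def
proof (intro conjI allI impI)
  show "substr M L"
    using MN NL le3_substr substr_trans by blast
  fix A assume A: "A \<subseteq> univ L \<and> countable A \<and> finite (A \<inter> QQ L)"
  then obtain h where h: "inj_hom_on h L A N" "\<forall>x\<in>A \<inter> univ N. h x = x"
    using le3_embeds[OF NL] by blast
  have "finite (h ` A \<inter> QQ N)"
    using inj_hom_on_QQ_image[OF assms(2,1) h(1)] A finite_subset by blast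
  moreover have "h ` A \<subseteq> univ N" "countable (h ` A)"
    using h(1) A unfolding inj_hom_on_def by simp_all
  ultimately obtain g where g: "inj_hom_on g N (h ` A) M" "\<forall>x\<in>h ` A \<inter> univ M. g x = x"
    using le3_embeds[OF MN] by blast
  have "univ M \<subseteq> univ N"
    using le3_substr[OF MN] unfolding substr_def by blast
  then show "\<exists>f. inj_hom_on f L A M \<and> (\<forall>x\<in>A \<inter> univ M. f x = x)"
    using inj_hom_on_comp_fixing[OF h g] by blast
qed

theorem claim3p3:
  shows "partial_order_on {M :: 'a fnq_str. K_fnq M} (rel_on_K le1) \<and>
         partial_order_on {M :: 'a fnq_str. K_fnq M} (rel_on_K le2) \<and>
         partial_order_on {M :: 'a fnq_str. K_fnq M} (rel_on_K le3)"
proof (intro conjI)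
  show "partial_order_on {M. K_fnq M} (rel_on_K le1)"
    by (rule partial_order_on_rel_on_K) (simp_all add: le1_def substr_refl, metis substr_trans)
  show "partial_order_on {M. K_fnq M} (rel_on_K le2)"
    by (rule partial_order_on_rel_on_K) (simp_all add: le2_refl le2_substr, metis le2_trans)
  show "partial_order_on {M. K_fnq M} (rel_on_K le3)"
    by (rule partial_order_on_rel_on_K) (simp_all add: le3_refl le3_substr, metis le3_trans)
qed

end
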